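(* Let $(N,v)$ be a TU game and $\delta>0$. Any state $(\mathbf{x},\rho)\in\Pi(v)$ is absorbing for the Coalition Proposal algorithm (described in the context): if the environment state is $(\mathbf{x},\rho)$, with every player $i$ having aspiration $a_i=x_i$ and coalition state $C_i$ equal to the block of $\rho$ containing $i$, then no proposal changes the aspirations or the coalition structure.
   Context: A TU game is a pair $(N,v)$ with $N=\{1,\dots,n\}$ and $v:2^N\to\mathbb{R}$, $v(\emptyset)=0$. $\mathcal{P}(N)$ denotes the set of partitions of $N$. A core solution is a pair $(\mathbf{x},\rho)$ with $\mathbf{x}\in\mathbb{R}^n$, $\rho\in\mathcal{P}(N)$, such that $\sum_{i\in S}x_i\ge v(S)$ for all $S\subseteq N$ and $\sum_{i\in S}x_i=v(S)$ for all $S\in\rho$; $\Pi(v)$ is the set of core solutions. Coalition Proposal algorithm with step $\delta$: each player $i$ holds an aspiration $a_i$ and a coalition state $C_i\subseteq N$. In each iteration: a player $i\in N$ is activated at random; $i$ chooses at random a set $S\subseteq N\setminus\{i\}$ and proposes $J=S\cup\{i\}$. If $\sum_{j\in J}a_j+\delta\le v(J)$ (success): $a_i\leftarrow a_i+\delta$; then for every $j\in J$ and every $k\in C_j$ with $k\neq j$, set $C_k\leftarrow\emptyset$; then set $C_j\leftarrow J$ for all $j\in J$. Otherwise (failure): if $C_i=\emptyset$, set $a_i\leftarrow\max(v(\{i\}),a_i-\delta)$. Finally, if $a_i=v(\{i\})$ and $C_i=\emptyset$, set $C_i\leftarrow\{i\}$. The environment state is $(\mathbf{a},\mathcal{C})$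 with $\mathbf{a}=(a_1,\dots,a_n)$ and $\mathcal{C}=\{C_i:i\in N\}$ the set of formed coalitions. *)

theory Defs
  imports Complex_Main "HOL-Library.Disjoint_Sets"
begin

definition players :: "nat \<Rightarrow> nat set" where
  "players n = {1..n}"

definition partitions :: "nat set \<Rightarrow> nat set set set" where
  "partitions N = {\<rho>. partition_on N \<rho>}"

definition core_solutions :: "nat set \<Rightarrow> (nat set \<Rightarrow> real) \<Rightarrow> ((nat \<Rightarrow> real) \<times> nat set set) set" where
  "core_solutions N v =
     {(x, \<rho>). \<rho> \<in> partitions N \<and>
              (\<forall>S. S \<subseteq> N \<longrightarrow> (\<Sum>i\<in>S. x i) \<ge> v S) \<and>
              (\<forall>S\<in>\<rho>. (\<Sum>i\<in>S. x i) = v S)}"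

text \<open>One iteration of the Coalition Proposal algorithm with step delta, given the
  activated player i and the randomly chosen set S (subset of N - {i}); the state is
  the aspiration vector a and the coalition states C.\<close>
definition cp_step ::
  "(nat set \<Rightarrow> real) \<Rightarrow> real \<Rightarrow> nat \<Rightarrow> nat set \<Rightarrow> (nat \<Rightarrow> real) \<times> (nat \<Rightarrow> nat set)
     \<Rightarrow> (nat \<Rightarrow> real) \<times> (nat \<Rightarrow> nat set)" where
  "cp_step v \<delta> i S st =
     (let a = fst st; C = snd st; J = insert i S;
          (a1, C1) =
            (if (\<Sum>j\<in>J. a j) + \<delta> \<le> v J
             then (a(i := a i + \<delta>),
                   (\<lambda>k. if k \<in> J then J
                        else if (\<exists>j\<in>J. k \<in> C j \<and> k \<noteq> j) then {} else C k))
             else (if C i = {} then a(i := max (v {i}) (a i - \<delta>)) else a, C))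
      in (a1, if a1 i = v {i} \<and> C1 i = {} then C1(i := {i}) else C1))"

end

theory Submission
  imports Defs
begin

(* A core allocation already gives every coalition J at least v J, so no proposal can raise an
   aspiration by delta > 0 and every proposal fails. A failed proposal only lowers the aspiration
   of an unattached proposer, and in a core solution every player is attached to its block. *)

lemma core_solution_proposal_fails:
  assumes "(x, \<rho>) \<in> core_solutions N v" and "J \<subseteq> N" and "\<delta> > 0"
  shows "\<not> (\<Sum>j\<in>J. x j) + \<delta> \<le> v J"
proof -
  have "(\<Sum>j\<in>J. x j) \<ge> v J"
    using assms(1,2) unfolding core_solutions_def by auto
  then show ?thesis
    using \<open>\<delta> > 0\<close> by linarith
qed

lemma cp_step_failed_proposal_of_attached_player:
  assumes "\<not> (\<Sum>j\<in>insert i S. a j) + \<delta> \<le> v (insert i S)" and "C i \<noteq> {}"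
  shows "cp_step v \<delta> i S (a, C) = (a, C)"
  using assms unfolding cp_step_def by (simp add: Let_def)

theorem proposition10:
  fixes n :: nat and v :: "nat set \<Rightarrow> real" and \<delta> :: real
    and x :: "nat \<Rightarrow> real" and \<rho> :: "nat set set"
    and a :: "nat \<Rightarrow> real" and C :: "nat \<Rightarrow> nat set"
  assumes "v {} = 0"
    and "\<delta> > 0"
    and "(x, \<rho>) \<in> core_solutions (players n) v"
    and "\<forall>j\<in>players n. a j = x j"
    and "\<forall>j\<in>players n. C j \<in> \<rho> \<and> j \<in> C j"
  shows "\<forall>i\<in>players n. \<forall>S. S \<subseteq> players n - {i} \<longrightarrow> cp_step v \<delta> i S (a, C) = (a, C)"
proof (intro ballI allI impI)
  fix i S
  assume i: "i \<in> players n" and S: "S \<subseteq> players n - {i}"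
  have J: "insert i S \<subseteq> players n"
    using i S by auto
  have "(\<Sum>j\<in>insert i S. a j) = (\<Sum>j\<in>insert i S. x j)"
    using assms(4) J by (intro sum.cong) auto
  then have "\<not> (\<Sum>j\<in>insert i S. a j) + \<delta> \<le> v (insert i S)"
    using core_solution_proposal_fails[OF assms(3) J assms(2)] by simp
  moreover have "C i \<noteq> {}"
    using assms(5) i by auto
  ultimately show "cp_step v \<delta> i S (a, C) = (a, C)"
    by (rule cp_step_failed_proposal_of_attached_player)
qed

end
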